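(* Let $L>0$, $N\in\mathbb N$, and let $\rho^N_L(t)$ be the deterministic particle approximation at a time $t$ (at which it is well defined), constructed from $\rho_{0,L}$ with $\int_{\mathbb T_L}\rho_{0,L}(x)\,dx=c_L$. Then $$\|\phi(\rho^N_L(t))\|_{L^\infty(\mathbb T_L)}\le\Big(\phi\Big(\frac{c_L}{L}\Big)+1\Big)+N\sum_{k=0}^{N-1}|\phi(\rho_{k+1}(t))-\phi(\rho_k(t))|^2.$$
   Context: $\phi:[0,\infty)\to[0,\infty)$ is a continuous strictly increasing function with $\phi(0)=0$ (in the paper $\phi(\rho)=\rho W'(\rho)-W(\rho)$ with further structural assumptions). $K:\mathbb R\to\mathbb R$ is even, continuous, $C^2$ away from $0$, with $K,K'$ bounded. $\mathbb T_L=\mathbb R/L\mathbb Z\cong[-L/2,L/2)$. Deterministic particle approximation: given $\rho_{0,L}\in L^\infty(\mathbb T_L)$, $\rho_{0,L}\ge0$, $c_L=\int_{\mathbb T_L}\rho_{0,L}\le1$, set $x_0=-L/2$, $x_k=\sup\{x:\int_{x_{k-1}}^x\rho_{0,L}<c_L/N\}$, $k=1,\dots,N$; particles $x_k(t)$ (indices mod $N$) solve $\dot x_k=-\frac{c_L}{N}\sum_{j\ne k}K'(x_k-x_j)-\frac{N}{c_L}[\phi(\rho_k)-\phi(\rho_{k-1})]$, $x_k(0)=x_k$, with $\rho_k(t)=\frac{c_L}{N(x_{k+1}(t)-x_k(t))}$, and $\rho^N_L(t,x)=\sum_{k=0}^{N-1}\rho_k(t)\chi_{[x_k(t),x_{k+1}(t))}(x)$;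 well defined at $t$ if $x_0(s)<\dots<x_{N-1}(s)$ for $s\in[0,t]$, in which case $\sum_{k=0}^{N-1}(x_{k+1}(t)-x_k(t))=L$. *)

theory Defs
  imports "HOL-Analysis.Analysis" "HOL-Probability.Essential_Supremum"
begin

text \<open>Particle positions are given by functions x k :: real => real (k < N),
  lifted to the real line. The torus T_L = R / L Z; indices are taken mod N and the
  wrap-around particle x_N is x_0 + L (the lift of x_0 one period later).\<close>

definition ppos :: "(nat \<Rightarrow> real \<Rightarrow> real) \<Rightarrow> real \<Rightarrow> nat \<Rightarrow> nat \<Rightarrow> real \<Rightarrow> real" where
  "ppos x L N k s = (if k < N then x k s else x 0 s + L)"

definition prho :: "(nat \<Rightarrow> real \<Rightarrow> real) \<Rightarrow> real \<Rightarrow> nat \<Rightarrow> real \<Rightarrow> nat \<Rightarrow> real \<Rightarrow> real" where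
  "prho x L N c k s = c / (real N * (ppos x L N (Suc (k mod N)) s - ppos x L N (k mod N) s))"

text \<open>The piecewise constant density rho^N_L(s, y), as an L-periodic function on R
  (i.e. a function on T_L): equal to rho_k(s) on [x_k(s), x_{k+1}(s)) modulo L.\<close>
definition rhoN :: "(nat \<Rightarrow> real \<Rightarrow> real) \<Rightarrow> real \<Rightarrow> nat \<Rightarrow> real \<Rightarrow> real \<Rightarrow> real \<Rightarrow> real" where
  "rhoN x L N c s y = (\<Sum>k<N. prho x L N c k s *
      indicator {z. \<exists>m::int. ppos x L N k s \<le> z + of_int m * L \<and> z + of_int m * L < ppos x L N (Suc k) s} y)"

text \<open>Well-definedness of the particle scheme on [0,t]: strict ordering
  x_0(s) < ... < x_{N-1}(s) < x_0(s) + L for all s in [0,t].\<close>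
definition well_ordered :: "(nat \<Rightarrow> real \<Rightarrow> real) \<Rightarrow> real \<Rightarrow> nat \<Rightarrow> real \<Rightarrow> bool" where
  "well_ordered x L N t \<longleftrightarrow> (\<forall>s\<in>{0..t}. \<forall>k<N. ppos x L N k s < ppos x L N (Suc k) s)"

end

theory Submission
  imports Defs
begin

(* Some particle cell has length at least L/N, so the density there is at most the average c/L
   and its \<phi>-value at most \<phi>(c/L). Every other \<phi>(\<rho>_k) differs from it by at most the total
   variation \<Sum>|\<phi>(\<rho>_{k+1}) - \<phi>(\<rho>_k)|, which Young's inequality |d| \<le> 1/N + N d^2 bounds by
   1 + N \<Sum>|\<phi>(\<rho>_{k+1}) - \<phi>(\<rho>_k)|^2. As the cells are disjoint modulo L, \<rho>^N_L only takes the
   values \<rho>_k and 0, so the bound holds pointwise. *)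

definition periodic_cell :: "real \<Rightarrow> real \<Rightarrow> real \<Rightarrow> real set" where
  "periodic_cell L a b = {z. \<exists>m::int. a \<le> z + of_int m * L \<and> z + of_int m * L < b}"

lemma periodic_cell_borel: "periodic_cell L a b \<in> sets borel"
  unfolding periodic_cell_def by measurable

lemma periodic_shift_unique:
  fixes L :: real
  assumes "L > 0"
    and "a \<le> z + of_int m * L" "z + of_int m * L < a + L"
    and "a \<le> z + of_int n * L" "z + of_int n * L < a + L"
  shows "m = n"
proof -
  have "of_int (m - n) * L < 1 * L" "(- 1) * L < of_int (m - n) * L"
    using assms(2-5) by (simp_all add: algebra_simps)
  then have "of_int (m - n) < (1::real)" "(- 1::real) < of_int (m - n)"
    using \<open>L > 0\<close> by (simp_all only: mult_less_cancel_right_pos)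
  then show ?thesis by linarith
qed

lemma disjoint_family_periodic_cells:
  fixes p :: "nat \<Rightarrow> real"
  assumes chain: "\<forall>k<N. p k < p (Suc k)" and wrap: "p N = p 0 + L" and "L > 0"
  shows "disjoint_family_on (\<lambda>k. periodic_cell L (p k) (p (Suc k))) {..<N}"
proof -
  have le: "p i \<le> p j" if "i \<le> j" "j \<le> N" for i j
    using lift_Suc_mono_le_ivl[of "{..<N}" p i j] chain that by force
  have False
    if kj: "k < j" "j < N"
      and y: "y \<in> periodic_cell L (p k) (p (Suc k))" "y \<in> periodic_cell L (p j) (p (Suc j))"
    for k j y
  proof -
    obtain m n where m: "p k \<le> y + of_int m * L" "y + of_int m * L < p (Suc k)"
      and n: "p j \<le> y + of_int n * L" "y + of_int n * L < p (Suc j)"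
      using y unfolding periodic_cell_def by blast
    have "p 0 \<le> p k" "p k < p (Suc k)" "p (Suc k) \<le> p j" "p j < p (Suc j)" "p (Suc j) \<le> p 0 + L"
      using le[of 0 k] le[of "Suc k" j] le[of "Suc j" N] chain kj wrap by auto
    then have "m = n"
      using periodic_shift_unique[OF \<open>L > 0\<close>, of "p 0" y m n] m n by linarith
    then show False
      using m n \<open>p (Suc k) \<le> p j\<close> unfolding \<open>m = n\<close> by linarith
  qed
  then show ?thesis
    unfolding disjoint_family_on_def by (metis disjoint_iff lessThan_iff linorder_neq_iff)
qed

lemma exists_ge_average:
  fixes f :: "nat \<Rightarrow> real"
  assumes "N > 0"
  shows "\<exists>k<N. (\<Sum>j<N. f j) / real N \<le> f k"
proof (rule ccontr)
  assume "\<not> ?thesis"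
  then have "(\<Sum>j<N. f j) < (\<Sum>k<N. (\<Sum>j<N. f j) / real N)"
    using assms by (intro sum_strict_mono) auto
  then show False
    using assms by simp
qed

lemma abs_diff_le_sum_abs_increments:
  fixes f :: "nat \<Rightarrow> 'a::ordered_ab_group_add_abs"
  assumes "i \<le> n" "j \<le> n"
  shows "\<bar>f i - f j\<bar> \<le> (\<Sum>k<n. \<bar>f (Suc k) - f k\<bar>)"
proof -
  have *: "\<bar>f b - f a\<bar> \<le> (\<Sum>k<n. \<bar>f (Suc k) - f k\<bar>)" if "a \<le> b" "b \<le> n" for a b
  proof -
    have "\<bar>f b - f a\<bar> = \<bar>\<Sum>k=a..<b. f (Suc k) - f k\<bar>"
      using sum_Suc_diff'[OF that(1), of f] by simp
    also have "\<dots> \<le> (\<Sum>k=a..<b. \<bar>f (Suc k) - f k\<bar>)"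
      by (rule sum_abs)
    also have "\<dots> \<le> (\<Sum>k<n. \<bar>f (Suc k) - f k\<bar>)"
      by (rule sum_mono2) (use that in auto)
    finally show ?thesis .
  qed
  show ?thesis
    using *[of j i] *[of i j] assms by (cases "j \<le> i") (auto simp: abs_minus_commute)
qed

lemma sum_abs_le_one_plus_sum_squares:
  fixes d :: "nat \<Rightarrow> real"
  assumes "N > 0"
  shows "(\<Sum>j<N. \<bar>d j\<bar>) \<le> 1 + real N * (\<Sum>j<N. (d j)\<^sup>2)"
proof -
  have "\<bar>d j\<bar> \<le> 1 / real N + real N * (d j)\<^sup>2" for j
  proof -
    have "0 \<le> (real N * \<bar>d j\<bar>)\<^sup>2 - 2 * (real N * \<bar>d j\<bar>) + 1"
      using zero_le_power2[of "real N * \<bar>d j\<bar> - 1"] by (simp add: power2_diff)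
    moreover have "0 \<le> real N * \<bar>d j\<bar>"
      by simp
    ultimately have "real N * \<bar>d j\<bar> \<le> 1 + (real N * \<bar>d j\<bar>)\<^sup>2"
      by linarith
    then show ?thesis
      using assms by (simp add: field_simps power2_eq_square)
  qed
  then have "(\<Sum>j<N. \<bar>d j\<bar>) \<le> (\<Sum>j<N. 1 / real N + real N * (d j)\<^sup>2)"
    by (rule sum_mono)
  also have "\<dots> = 1 + real N * (\<Sum>j<N. (d j)\<^sup>2)"
    using assms by (simp add: sum.distrib sum_distrib_left)
  finally show ?thesis .
qed

lemma integral_nonneg_AE_lebesgue:
  fixes f :: "'a::euclidean_space \<Rightarrow> real"
  assumes "AE x in lebesgue. 0 \<le> f x"
  shows "0 \<le> integral S f"
proof -
  obtain Z where Z: "Z \<in> null_sets lebesgue" "{x. \<not> 0 \<le> f x} \<subseteq> Z"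
    using assms by (auto simp: eventually_ae_filter)
  have "integral S f = integral S (\<lambda>x. max (f x) 0)"
  proof (rule integral_spike[of Z])
    show "negligible Z"
      using Z(1) by (simp add: negligible_iff_null_sets)
    show "max (f x) 0 = f x" if "x \<in> S - Z" for x
    proof -
      have "0 \<le> f x"
        using Z(2) that by blast
      then show ?thesis by simp
    qed
  qed
  also have "0 \<le> \<dots>"
    by (cases "(\<lambda>x. max (f x) 0) integrable_on S")
      (auto intro: Henstock_Kurzweil_Integration.integral_nonneg simp: not_integrable_integral)
  finally show ?thesis .
qed

lemma phi_density_le_mean_plus_variation:
  fixes \<phi> p r :: "_ \<Rightarrow> real"
  assumes \<phi>_mono: "mono_on {0..} \<phi>" and "\<phi> 0 = 0" and "N > 0" "L > 0" "c \<ge> 0"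
    and chain: "\<forall>k<N. p k < p (Suc k)" and wrap: "p N = p 0 + L"
    and r: "\<forall>k<N. r k = c / (real N * (p (Suc k) - p k))"
    and "k < N"
  shows "\<bar>\<phi> (r k)\<bar> \<le> (\<phi> (c / L) + 1) + real N * (\<Sum>j<N. \<bar>\<phi> (r (j + 1)) - \<phi> (r j)\<bar>^2)"
proof -
  have "0 \<le> r k"
    using chain r \<open>k < N\<close> \<open>c \<ge> 0\<close> by (simp add: divide_nonneg_pos)
  then have "0 \<le> \<phi> (r k)"
    using mono_onD[OF \<phi>_mono, of 0 "r k"] \<open>\<phi> 0 = 0\<close> by simp
  have "(\<Sum>j<N. p (Suc j) - p j) = L"
    using wrap by (simp add: sum_lessThan_telescope)
  then obtain k0 where k0: "k0 < N" "L / real N \<le> p (Suc k0) - p k0"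
    using exists_ge_average[OF \<open>N > 0\<close>, of "\<lambda>j. p (Suc j) - p j"] by auto
  have "r k0 = c / (real N * (p (Suc k0) - p k0))"
    using r k0 by simp
  also have "\<dots> \<le> c / (real N * (L / real N))"
    using chain k0 \<open>N > 0\<close> \<open>L > 0\<close> \<open>c \<ge> 0\<close>
    by (intro divide_left_mono mult_left_mono mult_pos_pos) auto
  also have "\<dots> = c / L"
    using \<open>N > 0\<close> by simp
  finally have "\<phi> (r k0) \<le> \<phi> (c / L)"
    using chain r k0 \<open>c \<ge> 0\<close> \<open>L > 0\<close> by (intro mono_onD[OF \<phi>_mono]) auto
  moreover have "\<phi> (r k) - \<phi> (r k0) \<le> (\<Sum>j<N. \<bar>\<phi> (r (Suc j)) - \<phi> (r j)\<bar>)"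
    using abs_diff_le_sum_abs_increments[of k N k0 "\<lambda>j. \<phi> (r j)"] \<open>k < N\<close> k0 by linarith
  moreover have "(\<Sum>j<N. \<bar>\<phi> (r (Suc j)) - \<phi> (r j)\<bar>)
      \<le> 1 + real N * (\<Sum>j<N. \<bar>\<phi> (r (j + 1)) - \<phi> (r j)\<bar>^2)"
    using sum_abs_le_one_plus_sum_squares[OF \<open>N > 0\<close>] by simp
  ultimately show ?thesis
    using \<open>0 \<le> \<phi> (r k)\<close> by linarith
qed

lemma comp_sum_indicator_disjoint_family:
  fixes f :: "'i \<Rightarrow> 'a::semiring_1" and g :: "'a \<Rightarrow> 'b::semiring_1"
  assumes "finite A" "disjoint_family_on S A" "g 0 = 0"
  shows "g (\<Sum>k\<in>A. f k * indicator (S k) y) = (\<Sum>k\<in>A. g (f k) * indicator (S k) y)"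
proof (cases "\<exists>k\<in>A. y \<in> S k")
  case True
  then obtain k where "k \<in> A" "y \<in> S k" by blast
  then have "(\<Sum>k\<in>A. f k * indicator (S k) y) = f k"
    and "(\<Sum>k\<in>A. g (f k) * indicator (S k) y) = g (f k)"
    by (auto intro: sum_indicator_disjoint_family[OF assms(2) _ assms(1)])
  then show ?thesis by simp
qed (use assms(3) in simp)

lemma esssup_comp_step_function_le:
  fixes g :: "real \<Rightarrow> real" and a :: "'i \<Rightarrow> real" and S :: "'i \<Rightarrow> real set"
  assumes "finite A" "A \<noteq> {}" "disjoint_family_on S A" "\<forall>k\<in>A. S k \<in> sets borel"
    and "g 0 = 0" "\<forall>k\<in>A. \<bar>g (a k)\<bar> \<le> B"
  shows "esssup (lebesgue_on \<Omega>) (\<lambda>y. ereal \<bar>g (\<Sum>k\<in>A. a k * indicator (S k) y)\<bar>) \<le> ereal B"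
proof -
  have step: "g (\<Sum>k\<in>A. a k * indicator (S k) y) = (\<Sum>k\<in>A. g (a k) * indicator (S k) y)" for y
    by (rule comp_sum_indicator_disjoint_family) (use assms in auto)
  have "(\<lambda>y. ereal \<bar>\<Sum>k\<in>A. g (a k) * indicator (S k) y\<bar>) \<in> borel_measurable borel"
    using assms(4) by (intro borel_measurable_ereal borel_measurable_abs borel_measurable_sum
        borel_measurable_times borel_measurable_const borel_measurable_indicator) auto
  then have meas:
    "(\<lambda>y. ereal \<bar>g (\<Sum>k\<in>A. a k * indicator (S k) y)\<bar>) \<in> borel_measurable (lebesgue_on \<Omega>)"
    by (simp add: step measurable_completion measurable_restrict_space1)
  have "\<bar>\<Sum>k\<in>A. g (a k) * indicator (S k) y\<bar> \<le> B" for y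
  proof (cases "\<exists>k\<in>A. y \<in> S k")
    case True
    then obtain k where "k \<in> A" "y \<in> S k" by blast
    then have "(\<Sum>k\<in>A. g (a k) * indicator (S k) y) = g (a k)"
      by (auto intro: sum_indicator_disjoint_family[OF assms(3) _ assms(1)])
    then show ?thesis
      using \<open>k \<in> A\<close> assms(6) by simp
  next
    case False
    obtain k where "k \<in> A" using assms(2) by blast
    then show ?thesis using False assms(6) by force
  qed
  then show ?thesis
    by (intro esssup_I[OF meas]) (simp add: step)
qed

theorem lemma4p5:
  fixes \<phi> K dK rho0 :: "real \<Rightarrow> real"
    and L c t :: real and N :: nat
    and x :: "nat \<Rightarrow> real \<Rightarrow> real"
  assumes L_pos: "L > 0" and N_pos: "N > 0"
    \<comment> \<open>phi: continuous, strictly increasing on [0,oo), phi(0)=0, nonnegative\<close>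
    and phi_cont: "continuous_on {0..} \<phi>"
    and phi_mono: "strict_mono_on {0..} \<phi>"
    and phi_0: "\<phi> 0 = 0"
    and phi_nonneg: "\<And>r. r \<ge> 0 \<Longrightarrow> \<phi> r \<ge> 0"
    \<comment> \<open>K even, continuous, C^2 away from 0 (derivative dK), K and K' bounded\<close>
    and K_even: "\<And>z. K (- z) = K z"
    and K_cont: "continuous_on UNIV K"
    and K_deriv: "\<And>z. z \<noteq> 0 \<Longrightarrow> (K has_real_derivative dK z) (at z)"
    and K_C2: "\<exists>ddK. (\<forall>z. z \<noteq> 0 \<longrightarrow> (dK has_real_derivative ddK z) (at z))
                    \<and> continuous_on (- {0}) ddK"
    and K_bdd: "bounded (range K)"
    and dK_bdd: "bounded (dK ` (- {0}))"
    \<comment> \<open>initial datum rho_{0,L} in L^oo(T_L), nonnegative, mass c_L \<le> 1\<close>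
    and rho0_periodic: "\<And>y. rho0 (y + L) = rho0 y"
    and rho0_meas: "rho0 \<in> borel_measurable lebesgue"
    and rho0_bdd: "\<exists>B. AE y in lebesgue. \<bar>rho0 y\<bar> \<le> B"
    and rho0_nonneg: "AE y in lebesgue. rho0 y \<ge> 0"
    and c_def: "c = integral {-L/2..L/2} rho0"
    and c_le: "c \<le> 1"
    \<comment> \<open>initial particle positions\<close>
    and x0_init: "x 0 0 = - L / 2"
    and xk_init: "\<And>k. 1 \<le> k \<Longrightarrow> k < N \<Longrightarrow>
                   x k 0 = Sup {y. integral {x (k - 1) 0..y} rho0 < c / real N}"
    \<comment> \<open>the particle ODE system on [0,t]\<close>
    and t_nonneg: "t \<ge> 0"
    and ode: "\<And>k s. k < N \<Longrightarrow> s \<in> {0..t} \<Longrightarrow>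
       (x k has_real_derivative
          (- (c / real N) * (\<Sum>j\<in>{..<N} - {k}. dK (x k s - x j s))
           - (real N / c) * (\<phi> (prho x L N c k s) - \<phi> (prho x L N c (k + N - 1) s))))
       (at s within {0..t})"
    \<comment> \<open>the scheme is well defined at time t\<close>
    and wd: "well_ordered x L N t"
  shows "esssup (lebesgue_on {-L/2..<L/2}) (\<lambda>y. ereal \<bar>\<phi> (rhoN x L N c t y)\<bar>)
         \<le> ereal ((\<phi> (c / L) + 1)
             + real N * (\<Sum>k<N. \<bar>\<phi> (prho x L N c (k + 1) t) - \<phi> (prho x L N c k t)\<bar>^2))"
proof -
  define p where "p k = ppos x L N k t" for k
  define r where "r k = prho x L N c k t" for k
  have chain: "\<forall>k<N. p k < p (Suc k)"
    using wd t_nonneg by (auto simp: well_ordered_def p_def)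
  have wrap: "p N = p 0 + L"
    using N_pos by (simp add: p_def ppos_def)
  have r_eq: "\<forall>k<N. r k = c / (real N * (p (Suc k) - p k))"
    by (simp add: r_def p_def prho_def)
  have "c \<ge> 0"
    unfolding c_def using rho0_nonneg by (rule integral_nonneg_AE_lebesgue)
  have bound: "\<forall>k\<in>{..<N}. \<bar>\<phi> (r k)\<bar>
      \<le> (\<phi> (c / L) + 1) + real N * (\<Sum>k<N. \<bar>\<phi> (r (k + 1)) - \<phi> (r k)\<bar>^2)"
    using phi_density_le_mean_plus_variation[OF strict_mono_on_imp_mono_on[OF phi_mono] phi_0
        N_pos L_pos \<open>c \<ge> 0\<close> chain wrap r_eq] by blast
  have rhoN_eq: "rhoN x L N c t = (\<lambda>y. \<Sum>k<N. r k * indicator (periodic_cell L (p k) (p (Suc k))) y)"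
    by (simp add: fun_eq_iff rhoN_def r_def p_def periodic_cell_def)
  show ?thesis
    unfolding rhoN_eq r_def[symmetric]
    by (rule esssup_comp_step_function_le[where S="\<lambda>k. periodic_cell L (p k) (p (Suc k))", OF _ _
          disjoint_family_periodic_cells[OF chain wrap L_pos] _ phi_0 bound])
      (use N_pos periodic_cell_borel in auto)
qed

end
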